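(* There exist universal constants $c_1,c_2,c_3,c_4>0$ and $n_0$ such that for all $n\ge n_0$ and all integers $k$ with $2\le k\le n$, there is a unit-weight graph with at most $n$ vertices on which simultaneously: $c_1k\le\mathsf{OPT}\le c_2k$; $\mathsf{OPT}^{\mathsf{stable}}\ge c_3 n$; and every persuasive signaling scheme (with any finite signal space) has cost at least $c_4\min\{k\sqrt{n},\,n\}$.
   Context: Setting. For a graph on vertex set $V$ with $N=|V|$ vertices, $W$ is a symmetric $\{0,1\}$ matrix with $W_{v,v}=1$ and $W_{u,v}=1$ iff $u,v$ are adjacent (unit-weight graph). A vector $\theta\in\mathbb{R}_{\ge0}^V$ is feasible if $W\theta\ge\mathbf 1$ coordinatewise, and stable if it is feasible and for every $v$, $\theta_v=\min\{x\ge0: x+\sum_{v'\neq v}W_{v,v'}\theta_{v'}\ge1\}$. $\mathsf{OPT}=\min\{\|\theta\|_1:\theta\ge0\text{ feasible}\}$ and $\mathsf{OPT}^{\mathsf{stable}}=\min\{\|\theta\|_1:\theta\text{ stable}\}$. Signaling. There are $N$ agents; the type profile $t$ is a uniformly random bijection $[N]\to V$. A signaling scheme with finite signal space $\Sigma\subset[0,1]$ is a map $\varphi$ assigning to each bijection $t$ a distribution $\varphi(t)$ on $\Sigma^V$; given $t$, $s\sim\varphi(t)$ is drawn and agent $i$ privately receives $s_{t_i}$. For agent $i$, a signal $\theta\in\Sigma$ with $\Pr[s_{t_i}=\theta]>0$ and $x\ge0$, let $Q_i(x\mid\theta)=\mathbb{E}\big[x+\sum_{v'\neq t_i}W_{t_i,v'}s_{v'}\,\big|\,s_{t_i}=\theta\big]$.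 The scheme is persuasive if for every agent $i$ and every such $\theta$: $Q_i(\theta\mid\theta)\ge1$ and $\theta=\min\{x\ge0:Q_i(x\mid\theta)\ge1\}$. Its cost is $\mathbb{E}[\|s\|_1]$. *)

theory Defs
  imports "HOL-Probability.Probability" "HOL-Combinatorics.Permutations"
begin

definition is_min :: "(real \<Rightarrow> bool) \<Rightarrow> real \<Rightarrow> bool" where
  "is_min P x \<longleftrightarrow> P x \<and> (\<forall>y. P y \<longrightarrow> x \<le> y)"

definition unit_graph :: "nat \<Rightarrow> (nat \<Rightarrow> nat \<Rightarrow> bool) \<Rightarrow> bool" where
  "unit_graph N E \<longleftrightarrow>
     (\<forall>u v. E u v \<longrightarrow> u < N \<and> v < N) \<and>
     (\<forall>u v. E u v \<longrightarrow> E v u) \<and> (\<forall>v. \<not> E v v)"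

definition Wm :: "(nat \<Rightarrow> nat \<Rightarrow> bool) \<Rightarrow> nat \<Rightarrow> nat \<Rightarrow> real" where
  "Wm E u v = (if u = v \<or> E u v then 1 else 0)"

definition feasible :: "nat \<Rightarrow> (nat \<Rightarrow> nat \<Rightarrow> bool) \<Rightarrow> (nat \<Rightarrow> real) \<Rightarrow> bool" where
  "feasible N E \<theta> \<longleftrightarrow> (\<forall>v<N. \<theta> v \<ge> 0) \<and>
     (\<forall>v<N. (\<Sum>u<N. Wm E v u * \<theta> u) \<ge> 1)"

definition stable :: "nat \<Rightarrow> (nat \<Rightarrow> nat \<Rightarrow> bool) \<Rightarrow> (nat \<Rightarrow> real) \<Rightarrow> bool" where
  "stable N E \<theta> \<longleftrightarrow> feasible N E \<theta> \<and>
     (\<forall>v<N. is_min (\<lambda>x. x \<ge> 0 \<and> x + (\<Sum>u\<in>{..<N}-{v}. Wm E v u * \<theta> u) \<ge> 1) (\<theta> v))"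
  for N E \<theta>

definition OPT :: "nat \<Rightarrow> (nat \<Rightarrow> nat \<Rightarrow> bool) \<Rightarrow> real" where
  "OPT N E = Inf {(\<Sum>v<N. \<bar>\<theta> v\<bar>) | \<theta>. feasible N E \<theta>}"

definition OPT_stable :: "nat \<Rightarrow> (nat \<Rightarrow> nat \<Rightarrow> bool) \<Rightarrow> real" where
  "OPT_stable N E = Inf {(\<Sum>v<N. \<bar>\<theta> v\<bar>) | \<theta>. stable N E \<theta>}"

text \<open>Type profiles: bijections [N] -> V, i.e. permutations of {0..<N}.\<close>
definition profiles :: "nat \<Rightarrow> (nat \<Rightarrow> nat) set" where
  "profiles N = {t. t permutes {..<N}}"

definition scheme :: "nat \<Rightarrow> real set \<Rightarrow> ((nat \<Rightarrow> nat) \<Rightarrow> (nat \<Rightarrow> real) pmf) \<Rightarrow> bool" where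
  "scheme N Sig \<phi> \<longleftrightarrow> finite Sig \<and> Sig \<subseteq> {0..1} \<and>
     (\<forall>t\<in>profiles N. set_pmf (\<phi> t) \<subseteq> {s. (\<forall>v<N. s v \<in> Sig) \<and> (\<forall>v. v \<ge> N \<longrightarrow> s v = 0)})"

definition joint :: "nat \<Rightarrow> ((nat \<Rightarrow> nat) \<Rightarrow> (nat \<Rightarrow> real) pmf) \<Rightarrow> ((nat \<Rightarrow> nat) \<times> (nat \<Rightarrow> real)) pmf" where
  "joint N \<phi> = do { t \<leftarrow> pmf_of_set (profiles N); s \<leftarrow> \<phi> t; return_pmf (t, s) }"

definition sig_event :: "nat \<Rightarrow> real \<Rightarrow> ((nat \<Rightarrow> nat) \<times> (nat \<Rightarrow> real)) set" where
  "sig_event i \<theta> = {(t, s). s (t i) = \<theta>}"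

definition Qf :: "nat \<Rightarrow> (nat \<Rightarrow> nat \<Rightarrow> bool) \<Rightarrow> ((nat \<Rightarrow> nat) \<Rightarrow> (nat \<Rightarrow> real) pmf)
                   \<Rightarrow> nat \<Rightarrow> real \<Rightarrow> real \<Rightarrow> real" where
  "Qf N E \<phi> i x \<theta> =
     measure_pmf.expectation (cond_pmf (joint N \<phi>) (sig_event i \<theta>))
       (\<lambda>(t, s). x + (\<Sum>v'\<in>{..<N}-{t i}. Wm E (t i) v' * s v'))"

definition persuasive :: "nat \<Rightarrow> (nat \<Rightarrow> nat \<Rightarrow> bool) \<Rightarrow> real set
                           \<Rightarrow> ((nat \<Rightarrow> nat) \<Rightarrow> (nat \<Rightarrow> real) pmf) \<Rightarrow> bool" where
  "persuasive N E Sig \<phi> \<longleftrightarrow>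
     (\<forall>i<N. \<forall>\<theta>\<in>Sig. measure_pmf.prob (joint N \<phi>) (sig_event i \<theta>) > 0 \<longrightarrow>
        Qf N E \<phi> i \<theta> \<theta> \<ge> 1 \<and> is_min (\<lambda>x. x \<ge> 0 \<and> Qf N E \<phi> i x \<theta> \<ge> 1) \<theta>)"

definition cost :: "nat \<Rightarrow> ((nat \<Rightarrow> nat) \<Rightarrow> (nat \<Rightarrow> real) pmf) \<Rightarrow> real" where
  "cost N \<phi> = measure_pmf.expectation (joint N \<phi>) (\<lambda>(t, s). \<Sum>v<N. \<bar>s v\<bar>)"

end

theory Submission
  imports Defs
begin

(* The graph consists of p stars with m leaves each, whose hubs form a clique, plus r = k div 2
   isolated vertices, where p is about min(k, sqrt n) and p m about n/2. Weight 1 on every hub and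
   isolated vertex shows OPT = p + r. In a stable profile a positive hub must equal 1, since
   otherwise its m >= 2 leaves would overpay for it; so at most one hub is positive and the leaves
   of the other p - 1 stars all pay 1, giving OPT_stable >= (p - 1) m.

   For a persuasive scheme, conditioning on an agent's signal theta shows that the expected slack
   theta + E[neighbour signals | theta] - 1 is nonnegative, and zero when theta > 0. Hence
   E[alpha(s_v) (s_v + sum_{u ~ v} s_u - 1)] >= 0 for every multiplier alpha with alpha(0) >= 0,
   and summing over agents (weak Lagrangian duality) bounds the cost from below by the minimum over
   s in [0,1]^V of sum_v s_v - alpha(s_v) (s_v + sum_{u ~ v} s_u - 1). With alpha = 1/4 on
   [0, 2/3), -1/(4(1 - x)) on [2/3, 1) and -sqrt(p m) at 1, this minimum is at least
   p sqrt(p m) / 24 on the star-clique graph. *)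

section \<open>Feasibility and stability through neighbour sums\<close>

definition nbr_sum :: "nat \<Rightarrow> (nat \<Rightarrow> nat \<Rightarrow> bool) \<Rightarrow> nat \<Rightarrow> (nat \<Rightarrow> real) \<Rightarrow> real" where
  "nbr_sum N E v s = (\<Sum>u\<in>{..<N}-{v}. Wm E v u * s u)"

lemma is_min_threshold_iff: "is_min (\<lambda>x. 0 \<le> x \<and> 1 \<le> x + c) t \<longleftrightarrow> t = max 0 (1 - c)"
proof
  assume h: "is_min (\<lambda>x. 0 \<le> x \<and> 1 \<le> x + c) t"
  then have "0 \<le> t" "1 \<le> t + c" "t \<le> max 0 (1 - c)"
    unfolding is_min_def by (auto simp: max_def)
  then show "t = max 0 (1 - c)" by (auto simp: max_def)
qed (auto simp: is_min_def max_def)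

lemma row_sum_eq:
  assumes "v < N" shows "(\<Sum>u<N. Wm E v u * \<theta> u) = \<theta> v + nbr_sum N E v \<theta>"
proof -
  have "(\<Sum>u<N. Wm E v u * \<theta> u) = Wm E v v * \<theta> v + (\<Sum>u\<in>{..<N}-{v}. Wm E v u * \<theta> u)"
    using assms by (subst sum.remove[of _ v]) auto
  then show ?thesis by (simp add: Wm_def nbr_sum_def)
qed

lemma feasible_iff_nbr_sum:
  "feasible N E \<theta> \<longleftrightarrow> (\<forall>v<N. 0 \<le> \<theta> v \<and> 1 \<le> \<theta> v + nbr_sum N E v \<theta>)"
  by (auto simp: feasible_def row_sum_eq)

lemma stable_iff_fixed_point:
  "stable N E \<theta> \<longleftrightarrow> (\<forall>v<N. \<theta> v = max 0 (1 - nbr_sum N E v \<theta>))"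
  unfolding stable_def feasible_iff_nbr_sum nbr_sum_def[symmetric] is_min_threshold_iff
  by (auto simp: max_def)

lemma nbr_sum_eq_sum_nbrs:
  assumes "\<And>v. \<not> E v v"
  shows "nbr_sum N E v s = (\<Sum>u | u < N \<and> E v u. s u)"
  unfolding nbr_sum_def using assms
  by (intro sum.mono_neutral_cong_right) (auto simp: Wm_def)

section \<open>Persuasive schemes and weak duality\<close>

lemma expectation_cond_pmf_finite:
  fixes f :: "'a \<Rightarrow> real"
  assumes fin: "finite (set_pmf J)" and ne: "set_pmf J \<inter> A \<noteq> {}"
  shows "measure_pmf.prob J A * measure_pmf.expectation (cond_pmf J A) f =
    (\<Sum>a\<in>set_pmf J \<inter> A. f a * pmf J a)"
proof -
  have pos: "measure_pmf.prob J A > 0" using ne by (auto intro: measure_pmf_posI)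
  have "measure_pmf.expectation (cond_pmf J A) f = (\<Sum>a\<in>set_pmf J \<inter> A. f a * pmf (cond_pmf J A) a)"
    by (rule integral_measure_pmf_real) (use fin ne in \<open>auto simp: set_cond_pmf\<close>)
  also have "\<dots> = (\<Sum>a\<in>set_pmf J \<inter> A. f a * pmf J a) / measure_pmf.prob J A"
    by (simp add: pmf_cond[OF ne] sum_divide_distrib)
  finally show ?thesis using pos by simp
qed

lemma expectation_split_by_value:
  fixes f :: "'a \<Rightarrow> real" and val :: "'a \<Rightarrow> 'b"
  assumes fin: "finite (set_pmf J)"
  shows "measure_pmf.expectation J f = (\<Sum>x\<in>val ` set_pmf J.
    measure_pmf.prob J {a. val a = x} * measure_pmf.expectation (cond_pmf J {a. val a = x}) f)"
proof -
  have "measure_pmf.expectation J f = (\<Sum>a\<in>set_pmf J. f a * pmf J a)"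
    by (rule integral_measure_pmf_real) (use fin in auto)
  also have "\<dots> = (\<Sum>x\<in>val ` set_pmf J. \<Sum>a\<in>set_pmf J \<inter> {a. val a = x}. f a * pmf J a)"
    using fin by (subst sum.image_gen[of _ _ val]) (auto intro!: sum.cong)
  also have "\<dots> = (\<Sum>x\<in>val ` set_pmf J.
      measure_pmf.prob J {a. val a = x} * measure_pmf.expectation (cond_pmf J {a. val a = x}) f)"
    using fin by (intro sum.cong refl expectation_cond_pmf_finite[symmetric]) auto
  finally show ?thesis .
qed

definition signal_vectors :: "nat \<Rightarrow> real set \<Rightarrow> (nat \<Rightarrow> real) set" where
  "signal_vectors N Sig = {s. (\<forall>v<N. s v \<in> Sig) \<and> (\<forall>v. v \<ge> N \<longrightarrow> s v = 0)}"

lemma finite_signal_vectors: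
  assumes "finite Sig" shows "finite (signal_vectors N Sig)"
proof -
  let ?ext = "\<lambda>g v. if v < N then g v else (0::real)"
  have "signal_vectors N Sig \<subseteq> ?ext ` (PiE {..<N} (\<lambda>_. Sig))"
  proof
    fix s assume s: "s \<in> signal_vectors N Sig"
    then have "s = ?ext (restrict s {..<N})" "restrict s {..<N} \<in> PiE {..<N} (\<lambda>_. Sig)"
      by (auto simp: signal_vectors_def)
    then show "s \<in> ?ext ` (PiE {..<N} (\<lambda>_. Sig))" by blast
  qed
  moreover have "finite (PiE {..<N} (\<lambda>_. Sig))" using assms by (intro finite_PiE) auto
  ultimately show ?thesis by (meson finite_surj)
qed

lemma finite_profiles: "finite (profiles N)"
  unfolding profiles_def by (rule finite_permutations) simp

lemma profiles_nonempty: "profiles N \<noteq> {}"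
  unfolding profiles_def using permutes_id by blast

lemma set_pmf_joint_subset:
  assumes "scheme N Sig \<phi>"
  shows "set_pmf (joint N \<phi>) \<subseteq> profiles N \<times> signal_vectors N Sig"
proof
  fix a assume "a \<in> set_pmf (joint N \<phi>)"
  then obtain t s where "t \<in> profiles N" "s \<in> set_pmf (\<phi> t)" "a = (t, s)"
    using finite_profiles[of N] profiles_nonempty[of N] by (auto simp: joint_def)
  then show "a \<in> profiles N \<times> signal_vectors N Sig"
    using assms unfolding scheme_def signal_vectors_def by blast
qed

lemma finite_set_pmf_joint:
  assumes "scheme N Sig \<phi>" shows "finite (set_pmf (joint N \<phi>))"
  using assms set_pmf_joint_subset[OF assms] finite_signal_vectors finite_profiles
  by (meson finite_SigmaI finite_subset scheme_def)

lemma sig_event_eq: "sig_event i \<theta> = {a. snd a (fst a i) = \<theta>}"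
  by (auto simp: sig_event_def)

lemma expectation_add_const:
  fixes f :: "'a \<Rightarrow> real"
  assumes "finite (set_pmf M)"
  shows "measure_pmf.expectation M (\<lambda>a. x + f a) = x + measure_pmf.expectation M f"
  using Bochner_Integration.integral_add[of M "\<lambda>_. x" f] assms
  by (simp add: integrable_measure_pmf_finite)

lemma Qf_eq:
  "Qf N E \<phi> i x \<theta> = measure_pmf.expectation (cond_pmf (joint N \<phi>) (sig_event i \<theta>))
     (\<lambda>a. x + nbr_sum N E (fst a i) (snd a))"
  unfolding Qf_def nbr_sum_def by (simp add: split_beta')

lemma Qf_eq_shift:
  assumes sch: "scheme N Sig \<phi>" and pos: "measure_pmf.prob (joint N \<phi>) (sig_event i \<theta>) > 0"
  shows "Qf N E \<phi> i x \<theta> = x + Qf N E \<phi> i 0 \<theta>"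
proof -
  have "set_pmf (joint N \<phi>) \<inter> sig_event i \<theta> \<noteq> {}"
    using pos by (auto simp: measure_pmf_zero_iff[symmetric])
  then have "finite (set_pmf (cond_pmf (joint N \<phi>) (sig_event i \<theta>)))"
    using finite_set_pmf_joint[OF sch] by (simp add: set_cond_pmf)
  then show ?thesis
    by (simp only: Qf_eq expectation_add_const add_0_left)
qed

lemma persuasive_slack:
  assumes sch: "scheme N Sig \<phi>" and pers: "persuasive N E Sig \<phi>"
    and i: "i < N" and \<theta>: "\<theta> \<in> Sig" and pos: "measure_pmf.prob (joint N \<phi>) (sig_event i \<theta>) > 0"
  shows "Qf N E \<phi> i \<theta> \<theta> \<ge> 1" and "\<theta> \<noteq> 0 \<Longrightarrow> Qf N E \<phi> i \<theta> \<theta> = 1"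
proof -
  define q where "q = Qf N E \<phi> i 0 \<theta>"
  have shift: "Qf N E \<phi> i x \<theta> = x + q" for x
    unfolding q_def by (rule Qf_eq_shift[OF sch pos])
  have "is_min (\<lambda>x. 0 \<le> x \<and> 1 \<le> Qf N E \<phi> i x \<theta>) \<theta>"
    using pers i \<theta> pos unfolding persuasive_def by blast
  then have "is_min (\<lambda>x. 0 \<le> x \<and> 1 \<le> x + q) \<theta>"
    by (simp only: shift)
  then have "\<theta> = max 0 (1 - q)" by (simp add: is_min_threshold_iff)
  then show "Qf N E \<phi> i \<theta> \<theta> \<ge> 1" and "\<theta> \<noteq> 0 \<Longrightarrow> Qf N E \<phi> i \<theta> \<theta> = 1"
    unfolding shift by (auto simp: max_def split: if_splits)
qed

lemma expected_weighted_slack_nonneg: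
  assumes sch: "scheme N Sig \<phi>" and pers: "persuasive N E Sig \<phi>" and i: "i < N"
    and \<alpha>0: "\<alpha> 0 \<ge> 0"
  shows "0 \<le> measure_pmf.expectation (joint N \<phi>)
    (\<lambda>(t, s). \<alpha> (s (t i)) * (s (t i) + nbr_sum N E (t i) s - 1))"
proof -
  define J where "J = joint N \<phi>"
  define val where "val a = snd a (fst a i)" for a :: "(nat \<Rightarrow> nat) \<times> (nat \<Rightarrow> real)"
  define Y where "Y a = nbr_sum N E (fst a i) (snd a)" for a :: "(nat \<Rightarrow> nat) \<times> (nat \<Rightarrow> real)"
  have fin: "finite (set_pmf J)" unfolding J_def by (rule finite_set_pmf_joint[OF sch])
  have term_nonneg: "0 \<le> measure_pmf.prob J {a. val a = \<theta>} *
      measure_pmf.expectation (cond_pmf J {a. val a = \<theta>}) (\<lambda>a. \<alpha> (val a) * (val a + Y a - 1))"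
    if \<theta>: "\<theta> \<in> val ` set_pmf J" for \<theta>
  proof -
    have ev: "{a. val a = \<theta>} = sig_event i \<theta>" by (simp add: sig_event_eq val_def)
    have ne: "set_pmf J \<inter> sig_event i \<theta> \<noteq> {}" using \<theta> ev by blast
    then have pos: "measure_pmf.prob (joint N \<phi>) (sig_event i \<theta>) > 0"
      by (auto simp: J_def intro: measure_pmf_posI)
    obtain t s where ts: "(t, s) \<in> set_pmf J" "\<theta> = s (t i)" using \<theta> by (auto simp: val_def)
    then have "t permutes {..<N}" "s \<in> signal_vectors N Sig"
      using set_pmf_joint_subset[OF sch] by (auto simp: J_def profiles_def)
    moreover from this(1) have "t i < N" using i permutes_in_image[of t "{..<N}" i] by simp
    ultimately have \<theta>Sig: "\<theta> \<in> Sig" using ts(2) by (simp add: signal_vectors_def)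
    have "measure_pmf.expectation (cond_pmf J {a. val a = \<theta>}) (\<lambda>a. \<alpha> (val a) * (val a + Y a - 1))
        = measure_pmf.expectation (cond_pmf J (sig_event i \<theta>)) (\<lambda>a. \<alpha> \<theta> * ((\<theta> - 1) + Y a))"
      unfolding ev using ne
      by (intro integral_cong_AE) (auto simp: AE_measure_pmf_iff set_cond_pmf sig_event_eq val_def)
    also have "\<dots> = \<alpha> \<theta> * Qf N E \<phi> i (\<theta> - 1) \<theta>"
      by (simp only: integral_mult_right_zero Qf_eq Y_def J_def)
    also have "\<dots> = \<alpha> \<theta> * (Qf N E \<phi> i \<theta> \<theta> - 1)"
      using Qf_eq_shift[OF sch pos, of E "\<theta> - 1"] Qf_eq_shift[OF sch pos, of E \<theta>] by simp
    also have "\<dots> \<ge> 0"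
      using persuasive_slack[OF sch pers i \<theta>Sig pos] \<alpha>0 by (cases "\<theta> = 0") auto
    finally show ?thesis by simp
  qed
  have "measure_pmf.expectation J (\<lambda>a. \<alpha> (val a) * (val a + Y a - 1)) =
    (\<Sum>\<theta>\<in>val ` set_pmf J. measure_pmf.prob J {a. val a = \<theta>} *
      measure_pmf.expectation (cond_pmf J {a. val a = \<theta>}) (\<lambda>a. \<alpha> (val a) * (val a + Y a - 1)))"
    by (rule expectation_split_by_value[OF fin])
  also have "\<dots> \<ge> 0" by (rule sum_nonneg) (rule term_nonneg)
  finally show ?thesis by (simp add: J_def val_def Y_def split_beta')
qed

definition lagrangian :: "nat \<Rightarrow> (nat \<Rightarrow> nat \<Rightarrow> bool) \<Rightarrow> (real \<Rightarrow> real) \<Rightarrow> (nat \<Rightarrow> real) \<Rightarrow> real" where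
  "lagrangian N E \<alpha> s = (\<Sum>v<N. s v - \<alpha> (s v) * (s v + nbr_sum N E v s - 1))"

lemma cost_ge_lagrangian:
  assumes sch: "scheme N Sig \<phi>" and pers: "persuasive N E Sig \<phi>" and \<alpha>0: "\<alpha> 0 \<ge> 0"
    and bound: "\<And>s. (\<forall>v<N. 0 \<le> s v \<and> s v \<le> 1) \<Longrightarrow> B \<le> lagrangian N E \<alpha> s"
  shows "B \<le> cost N \<phi>"
proof -
  define J where "J = joint N \<phi>"
  define slack where
    "slack i = (\<lambda>(t :: nat \<Rightarrow> nat, s). \<alpha> (s (t i)) * (s (t i) + nbr_sum N E (t i) s - 1))" for i
  have int: "integrable (measure_pmf J) f" for f :: "_ \<Rightarrow> real"
    using finite_set_pmf_joint[OF sch] by (simp add: J_def integrable_measure_pmf_finite)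
  have pointwise: "B + (\<Sum>i<N. slack i (t, s)) \<le> (\<Sum>v<N. \<bar>s v\<bar>)" if ts: "(t, s) \<in> set_pmf J" for t s
  proof -
    have t: "t permutes {..<N}" and s: "s \<in> signal_vectors N Sig"
      using ts set_pmf_joint_subset[OF sch] by (auto simp: J_def profiles_def)
    have s01: "\<forall>v<N. 0 \<le> s v \<and> s v \<le> 1" using s sch by (auto simp: signal_vectors_def scheme_def)
    have "(\<Sum>i<N. slack i (t, s)) = (\<Sum>v<N. \<alpha> (s v) * (s v + nbr_sum N E v s - 1))"
      unfolding slack_def using sum.reindex_bij_betw[OF permutes_imp_bij[OF t],
          of "\<lambda>v. \<alpha> (s v) * (s v + nbr_sum N E v s - 1)"] by simp
    moreover have "(\<Sum>v<N. \<bar>s v\<bar>) = (\<Sum>v<N. s v)" using s01 by (intro sum.cong) auto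
    ultimately show ?thesis using bound[OF s01] by (simp add: lagrangian_def sum_subtractf)
  qed
  have "0 \<le> (\<Sum>i<N. measure_pmf.expectation J (slack i))"
  proof (rule sum_nonneg)
    fix i assume "i \<in> {..<N}"
    then show "0 \<le> measure_pmf.expectation J (slack i)"
      using expected_weighted_slack_nonneg[where \<alpha>=\<alpha>, OF sch pers _ \<alpha>0]
      by (simp add: J_def slack_def)
  qed
  then have "B \<le> B + (\<Sum>i<N. measure_pmf.expectation J (slack i))" by simp
  also have "\<dots> = measure_pmf.expectation J (\<lambda>a. B + (\<Sum>i<N. slack i a))"
    by (simp add: int integral_sum)
  also have "\<dots> \<le> cost N \<phi>"
    unfolding cost_def J_def[symmetric]
    by (intro integral_mono_AE int) (auto simp: AE_measure_pmf_iff pointwise)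
  finally show ?thesis .
qed

section \<open>The star-clique graph\<close>

(* Vertex g(m+1) is the hub of star g and the next m vertices are its leaves; the hubs form a
   clique. On p(m+1) + r vertices, the last r vertices are isolated. *)
definition star_clique :: "nat \<Rightarrow> nat \<Rightarrow> nat \<Rightarrow> nat \<Rightarrow> bool" where
  "star_clique p m u v \<longleftrightarrow> u < p * Suc m \<and> v < p * Suc m \<and> u \<noteq> v \<and>
     ((u mod Suc m = 0 \<and> v mod Suc m = 0) \<or>
      (u div Suc m = v div Suc m \<and> (u mod Suc m = 0 \<or> v mod Suc m = 0)))"

abbreviation hub :: "nat \<Rightarrow> nat \<Rightarrow> nat" where
  "hub m g \<equiv> g * Suc m"

abbreviation leaves :: "nat \<Rightarrow> nat \<Rightarrow> nat set" where
  "leaves m g \<equiv> {g * Suc m + 1..<g * Suc m + Suc m}"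

lemma unit_graph_star_clique: "unit_graph (p * Suc m + r) (star_clique p m)"
  unfolding unit_graph_def star_clique_def by auto

lemma hub_div_mod: "hub m g div Suc m = g" "hub m g mod Suc m = 0"
  by (simp_all del: mult_Suc_right)

lemma leaf_div_mod:
  assumes "u \<in> leaves m g"
  shows "u div Suc m = g" "u mod Suc m \<noteq> 0"
proof -
  define j where "j = u - g * Suc m"
  have "u = g * Suc m + j" "1 \<le> j" "j < Suc m" using assms by (auto simp: j_def)
  then show "u div Suc m = g" "u mod Suc m \<noteq> 0" by (simp_all del: mult_Suc_right)
qed

lemma hub_less: "g < p \<Longrightarrow> hub m g < p * Suc m"
  by (simp only: mult_less_cancel2) simp

lemma leaf_less:
  assumes "g < p" "u \<in> leaves m g" shows "u < p * Suc m"
proof -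
  have "u < (g + 1) * Suc m" using assms by simp
  also have "\<dots> \<le> p * Suc m" using assms by (intro mult_right_mono) auto
  finally show ?thesis .
qed

lemma hub_less_order: "g < p \<Longrightarrow> hub m g < p * Suc m + r"
  using hub_less[of g p m] by linarith

lemma leaf_less_order: "g < p \<Longrightarrow> u \<in> leaves m g \<Longrightarrow> u < p * Suc m + r"
  using leaf_less by fastforce

lemma star_clique_vertex_cases:
  assumes v: "v < p * Suc m + r"
  obtains (hub) g where "g < p" "v = hub m g"
    | (leaf) g where "g < p" "v \<in> leaves m g"
    | (isolated) i where "i < r" "v = p * Suc m + i"
proof (cases "v < p * Suc m")
  case True
  define g where "g = v div Suc m"
  have g: "g < p" using True by (simp add: g_def less_mult_imp_div_less)
  have vg: "v = g * Suc m + v mod Suc m" unfolding g_def by (rule div_mult_mod_eq[symmetric])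
  show ?thesis
  proof (cases "v mod Suc m = 0")
    case True then show ?thesis using hub g vg by simp
  next
    case False
    have "v mod Suc m < Suc m" by simp
    then have "v \<in> leaves m g" using vg False by (simp only: atLeastLessThan_iff) linarith
    then show ?thesis using leaf g by blast
  qed
next
  case False
  then show ?thesis using isolated[of "v - p * Suc m"] v by simp
qed

lemma sum_star_clique:
  "(\<Sum>v<p * Suc m + r. f v) =
     (\<Sum>g<p. f (hub m g) + (\<Sum>u\<in>leaves m g. f u)) + (\<Sum>i<r. f (p * Suc m + i))"
proof -
  have "(\<Sum>v<p * Suc m + r. f v) = (\<Sum>v<p * Suc m. f v) + (\<Sum>v\<in>{p * Suc m..<p * Suc m + r}. f v)"
    by (simp add: atLeast0LessThan[symmetric] sum.atLeastLessThan_concat)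
  also have "(\<Sum>v\<in>{p * Suc m..<p * Suc m + r}. f v) = (\<Sum>i<r. f (p * Suc m + i))"
    by (rule sum.reindex_bij_witness[of _ "\<lambda>i. p * Suc m + i" "\<lambda>v. v - p * Suc m"]) auto
  also have "(\<Sum>v<p * Suc m. f v) = (\<Sum>g<p. \<Sum>u\<in>{g * Suc m..<g * Suc m + Suc m}. f u)"
    by (rule sum.nat_group[symmetric])
  also have "\<dots> = (\<Sum>g<p. f (hub m g) + (\<Sum>u\<in>leaves m g. f u))"
    by (intro sum.cong refl) (simp add: sum.atLeast_Suc_lessThan add.assoc)
  finally show ?thesis .
qed

lemma star_clique_nbrs_hub:
  assumes g: "g < p"
  shows "{u. u < p * Suc m + r \<and> star_clique p m (hub m g) u} = hub m ` ({..<p} - {g}) \<union> leaves m g"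
proof (intro equalityI subsetI)
  fix u assume "u \<in> {u. u < p * Suc m + r \<and> star_clique p m (hub m g) u}"
  then have u: "u < p * Suc m" "u \<noteq> hub m g" "u mod Suc m = 0 \<or> u div Suc m = g"
    unfolding mem_Collect_eq star_clique_def hub_div_mod by auto
  from u(1) have "u < p * Suc m + 0" by simp
  then show "u \<in> hub m ` ({..<p} - {g}) \<union> leaves m g"
  proof (cases rule: star_clique_vertex_cases)
    case (hub g')
    then show ?thesis using u by (auto simp del: mult_Suc_right)
  next
    case (leaf g')
    then have "g' = g" using u(3) leaf_div_mod[OF leaf(2)] by simp
    with leaf show ?thesis by simp
  next
    case (isolated i)
    then show ?thesis by simp
  qed
next
  fix u assume "u \<in> hub m ` ({..<p} - {g}) \<union> leaves m g"
  then consider (hub) g' where "g' < p" "g' \<noteq> g" "u = hub m g'" | (leaf) "u \<in> leaves m g"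
    by blast
  then show "u \<in> {u. u < p * Suc m + r \<and> star_clique p m (hub m g) u}"
  proof cases
    case hub
    have "u < p * Suc m + r" using hub_less[OF hub(1), of m] hub(3) by linarith
    moreover have "star_clique p m (hub m g) u" using g hub
      unfolding star_clique_def by (simp add: hub_div_mod del: mult_Suc_right)
    ultimately show ?thesis by simp
  next
    case leaf
    then have "u \<noteq> hub m g" using leaf_div_mod(2)[OF leaf] hub_div_mod(2) by metis
    then have "star_clique p m (hub m g) u"
      using leaf_div_mod[OF leaf] leaf_less[OF g leaf] hub_less[OF g, of m]
      unfolding star_clique_def by (simp add: hub_div_mod del: mult_Suc_right)
    moreover have "u < p * Suc m + r" using leaf_less[OF g leaf] by linarith
    ultimately show ?thesis by simp
  qed
qed

lemma star_clique_nbrs_leaf: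
  assumes g: "g < p" and u: "u \<in> leaves m g"
  shows "{w. w < p * Suc m + r \<and> star_clique p m u w} = {hub m g}"
proof (intro equalityI subsetI)
  fix w assume "w \<in> {w. w < p * Suc m + r \<and> star_clique p m u w}"
  then have w: "w < p * Suc m" "w mod Suc m = 0" "w div Suc m = g"
    using leaf_div_mod[OF u] unfolding mem_Collect_eq star_clique_def by auto
  then show "w \<in> {hub m g}" using div_mult_mod_eq[of w "Suc m"] by (simp del: mult_Suc_right)
next
  fix w assume "w \<in> {hub m g}"
  moreover have "u \<noteq> hub m g" using leaf_div_mod(2)[OF u] hub_div_mod(2) by metis
  ultimately have "star_clique p m u w"
    using leaf_div_mod[OF u] leaf_less[OF g u] hub_less[OF g, of m]
    unfolding star_clique_def by (simp add: hub_div_mod del: mult_Suc_right)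
  moreover have "w < p * Suc m + r" using hub_less[OF g, of m] \<open>w \<in> {hub m g}\<close> by simp
  ultimately show "w \<in> {w. w < p * Suc m + r \<and> star_clique p m u w}" by simp
qed

lemma star_clique_irrefl: "\<not> star_clique p m v v"
  by (simp add: star_clique_def)

lemma nbr_sum_hub:
  assumes g: "g < p"
  shows "nbr_sum (p * Suc m + r) (star_clique p m) (hub m g) s =
    (\<Sum>g'\<in>{..<p}-{g}. s (hub m g')) + (\<Sum>u\<in>leaves m g. s u)"
proof -
  have inj: "inj_on (hub m) ({..<p} - {g})" unfolding inj_on_def by (simp del: mult_Suc_right)
  have "hub m g' \<notin> leaves m g" for g'
    using leaf_div_mod(2) hub_div_mod(2) by metis
  then have disj: "hub m ` ({..<p} - {g}) \<inter> leaves m g = {}" by blast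
  have "nbr_sum (p * Suc m + r) (star_clique p m) (hub m g) s =
      (\<Sum>u\<in>hub m ` ({..<p} - {g}) \<union> leaves m g. s u)"
    by (simp only: nbr_sum_eq_sum_nbrs star_clique_irrefl star_clique_nbrs_hub[OF g]
        not_False_eq_True)
  also have "\<dots> = (\<Sum>u\<in>hub m ` ({..<p} - {g}). s u) + (\<Sum>u\<in>leaves m g. s u)"
    using disj by (intro sum.union_disjoint) auto
  also have "(\<Sum>u\<in>hub m ` ({..<p} - {g}). s u) = (\<Sum>g'\<in>{..<p}-{g}. s (hub m g'))"
    using sum.reindex[OF inj, of s] by simp
  finally show ?thesis .
qed

lemma nbr_sum_leaf:
  assumes "g < p" and "u \<in> leaves m g"
  shows "nbr_sum (p * Suc m + r) (star_clique p m) u s = s (hub m g)"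
  by (simp only: nbr_sum_eq_sum_nbrs star_clique_irrefl star_clique_nbrs_leaf[OF assms]
      not_False_eq_True) simp

lemma nbr_sum_isolated: "nbr_sum (p * Suc m + r) (star_clique p m) (p * Suc m + i) s = 0"
  by (simp add: nbr_sum_eq_sum_nbrs star_clique_irrefl) (simp add: star_clique_def)

section \<open>Optimal and stable covers\<close>

lemma feasible_star_clique_sum_ge:
  assumes m: "m \<ge> 1" and f: "feasible (p * Suc m + r) (star_clique p m) \<theta>"
  shows "real (p + r) \<le> (\<Sum>v<p * Suc m + r. \<bar>\<theta> v\<bar>)"
proof -
  have cov: "0 \<le> \<theta> v \<and> 1 \<le> \<theta> v + nbr_sum (p * Suc m + r) (star_clique p m) v \<theta>"
    if "v < p * Suc m + r" for v
    using f that by (simp add: feasible_iff_nbr_sum)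
  have star: "1 \<le> \<bar>\<theta> (hub m g)\<bar> + (\<Sum>u\<in>leaves m g. \<bar>\<theta> u\<bar>)" if g: "g < p" for g
  proof -
    have u: "hub m g + 1 \<in> leaves m g" using m by simp
    have "1 \<le> \<theta> (hub m g + 1) + \<theta> (hub m g)"
      using cov[OF leaf_less_order[OF g u]] nbr_sum_leaf[OF g u] by simp
    moreover have "\<bar>\<theta> (hub m g + 1)\<bar> \<le> (\<Sum>u\<in>leaves m g. \<bar>\<theta> u\<bar>)"
      using u by (intro member_le_sum) auto
    ultimately show ?thesis by linarith
  qed
  have isolated: "1 \<le> \<bar>\<theta> (p * Suc m + i)\<bar>" if "i < r" for i
    using cov[of "p * Suc m + i"] that nbr_sum_isolated by simp
  have "real (p + r) = (\<Sum>g<p. 1) + (\<Sum>i<r. 1)" by simp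
  also have "\<dots> \<le> (\<Sum>g<p. \<bar>\<theta> (hub m g)\<bar> + (\<Sum>u\<in>leaves m g. \<bar>\<theta> u\<bar>)) + (\<Sum>i<r. \<bar>\<theta> (p * Suc m + i)\<bar>)"
    using star isolated by (intro add_mono sum_mono) auto
  also have "\<dots> = (\<Sum>v<p * Suc m + r. \<bar>\<theta> v\<bar>)" by (rule sum_star_clique[symmetric])
  finally show ?thesis .
qed

definition hub_cover :: "nat \<Rightarrow> nat \<Rightarrow> nat \<Rightarrow> nat \<Rightarrow> real" where
  "hub_cover p m r v = (if v < p * Suc m + r \<and> (v < p * Suc m \<longrightarrow> v mod Suc m = 0) then 1 else 0)"

lemma hub_cover_hub: "g < p \<Longrightarrow> hub_cover p m r (hub m g) = 1"
  using hub_less_order[of g p m r] by (simp add: hub_cover_def hub_div_mod del: mult_Suc_right)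

lemma hub_cover_leaf: "g < p \<Longrightarrow> u \<in> leaves m g \<Longrightarrow> hub_cover p m r u = 0"
  using leaf_less leaf_div_mod by (fastforce simp: hub_cover_def)

lemma hub_cover_isolated: "i < r \<Longrightarrow> hub_cover p m r (p * Suc m + i) = 1"
  by (simp add: hub_cover_def)

lemma feasible_hub_cover: "feasible (p * Suc m + r) (star_clique p m) (hub_cover p m r)"
  unfolding feasible_iff_nbr_sum
proof (intro allI impI conjI)
  fix v assume v: "v < p * Suc m + r"
  show "0 \<le> hub_cover p m r v" by (simp add: hub_cover_def)
  have nbr_nonneg: "0 \<le> nbr_sum (p * Suc m + r) (star_clique p m) v (hub_cover p m r)"
    unfolding nbr_sum_def by (intro sum_nonneg) (simp add: Wm_def hub_cover_def)
  from v show
    "1 \<le> hub_cover p m r v + nbr_sum (p * Suc m + r) (star_clique p m) v (hub_cover p m r)"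
  proof (cases rule: star_clique_vertex_cases)
    case (hub g)
    then show ?thesis using nbr_nonneg hub_cover_hub by simp
  next
    case (leaf g)
    then show ?thesis using nbr_sum_leaf hub_cover_hub hub_cover_leaf by simp
  next
    case (isolated i)
    then show ?thesis using nbr_nonneg hub_cover_isolated by simp
  qed
qed

lemma sum_hub_cover: "(\<Sum>v<p * Suc m + r. \<bar>hub_cover p m r v\<bar>) = real (p + r)"
  by (simp add: sum_star_clique hub_cover_hub hub_cover_leaf hub_cover_isolated del: mult_Suc_right)

lemma OPT_star_clique:
  assumes "m \<ge> 1"
  shows "OPT (p * Suc m + r) (star_clique p m) = real (p + r)"
  unfolding OPT_def
proof (rule cInf_eq_minimum)
  show "real (p + r) \<in> {\<Sum>v<p * Suc m + r. \<bar>\<theta> v\<bar> |\<theta>. feasible (p * Suc m + r) (star_clique p m) \<theta>}"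
    using feasible_hub_cover sum_hub_cover by (intro CollectI exI[of _ "hub_cover p m r"]) simp
qed (use feasible_star_clique_sum_ge[OF assms] in blast)

lemma stable_star_clique_leaf:
  assumes st: "stable (p * Suc m + r) (star_clique p m) \<theta>" and g: "g < p" and u: "u \<in> leaves m g"
  shows "\<theta> u = max 0 (1 - \<theta> (hub m g))"
  using st leaf_less_order[OF g u] nbr_sum_leaf[OF g u] unfolding stable_iff_fixed_point by metis

lemma stable_star_clique_leaves_sum:
  assumes st: "stable (p * Suc m + r) (star_clique p m) \<theta>" and g: "g < p"
  shows "(\<Sum>u\<in>leaves m g. \<theta> u) = real m * max 0 (1 - \<theta> (hub m g))"
  using stable_star_clique_leaf[OF st g] by simp

lemma stable_star_clique_other_hubs:
  assumes m: "m \<ge> 2" and st: "stable (p * Suc m + r) (star_clique p m) \<theta>"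
    and g: "g < p" and pos: "\<theta> (hub m g) > 0"
  shows "\<forall>g'\<in>{..<p}-{g}. \<theta> (hub m g') = 0"
proof -
  define y where "y = \<theta> (hub m g)"
  define others where "others = (\<Sum>g'\<in>{..<p}-{g}. \<theta> (hub m g'))"
  have fix_pt: "\<theta> v = max 0 (1 - nbr_sum (p * Suc m + r) (star_clique p m) v \<theta>)"
    if "v < p * Suc m + r" for v
    using st that unfolding stable_iff_fixed_point by blast
  have hubs_nonneg: "\<theta> (hub m g') \<ge> 0" if "g' < p" for g'
    using fix_pt[OF hub_less_order[OF that]] by simp
  then have "others \<ge> 0" unfolding others_def by (intro sum_nonneg) auto
  define X where "X = real m * max 0 (1 - y)"
  have "y = max 0 (1 - (others + X))"
    using fix_pt[OF hub_less_order[OF g]] nbr_sum_hub[OF g] stable_star_clique_leaves_sum[OF st g]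
    by (simp add: y_def others_def X_def)
  moreover have "y > 0" using pos by (simp add: y_def)
  ultimately have eq: "y = 1 - others - X" by (auto simp: max_def split: if_splits)
  have "y = 1"
  proof (rule ccontr)
    assume "y \<noteq> 1"
    have "X \<ge> 0" by (simp add: X_def)
    then have "y \<le> 1" using eq \<open>others \<ge> 0\<close> by simp
    with \<open>y \<noteq> 1\<close> have "y < 1" by simp
    then have "X = real m * (1 - y)" by (simp add: X_def)
    also have "\<dots> \<ge> 2 * (1 - y)" using m \<open>y < 1\<close> by (intro mult_right_mono) auto
    finally show False using eq \<open>others \<ge> 0\<close> \<open>y < 1\<close> by argo
  qed
  moreover from this have "X = 0" by (simp add: X_def)
  ultimately have "others = 0" using eq by linarith
  then show ?thesis
    using hubs_nonneg unfolding others_def by (subst (asm) sum_nonneg_eq_0_iff) auto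
qed

lemma stable_star_clique_sum_ge:
  assumes m: "m \<ge> 2" and st: "stable (p * Suc m + r) (star_clique p m) \<theta>"
  shows "real ((p - 1) * m + r) \<le> (\<Sum>v<p * Suc m + r. \<bar>\<theta> v\<bar>)"
proof -
  define X where "X g = (\<Sum>u\<in>leaves m g. \<theta> u)" for g
  have nonneg: "\<theta> v \<ge> 0" if "v < p * Suc m + r" for v
    using st that unfolding stable_iff_fixed_point by (metis max.cobounded1)
  have X: "X g = real m * max 0 (1 - \<theta> (hub m g))" if "g < p" for g
    using stable_star_clique_leaves_sum[OF st that] by (simp add: X_def)
  have X_nonneg: "X g \<ge> 0" if "g < p" for g using X[OF that] by simp
  have X_zero_hub: "X g = real m" if "g < p" "\<theta> (hub m g) = 0" for g using X that by simp
  have isolated: "\<bar>\<theta> (p * Suc m + i)\<bar> = 1" if "i < r" for i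
    using st that nbr_sum_isolated unfolding stable_iff_fixed_point by simp
  have star: "X g \<le> \<bar>\<theta> (hub m g)\<bar> + (\<Sum>u\<in>leaves m g. \<bar>\<theta> u\<bar>)" if g: "g < p" for g
  proof -
    have "(\<Sum>u\<in>leaves m g. \<bar>\<theta> u\<bar>) = X g"
      unfolding X_def using nonneg leaf_less_order[OF g] by (intro sum.cong) auto
    then show ?thesis by simp
  qed
  have "real ((p - 1) * m) \<le> (\<Sum>g<p. X g)"
  proof (cases "\<exists>g<p. \<theta> (hub m g) \<noteq> 0")
    case False
    then have "(\<Sum>g<p. X g) = real (p * m)" using X_zero_hub by simp
    moreover have "(p - 1) * m \<le> p * m" by simp
    ultimately show ?thesis by (simp only: of_nat_le_iff)
  next
    case True
    then obtain g0 where g0: "g0 < p" "\<theta> (hub m g0) \<noteq> 0" by blast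
    then have "\<theta> (hub m g0) > 0" using nonneg[OF hub_less_order[OF g0(1)]] by simp
    then have others: "\<forall>g\<in>{..<p}-{g0}. \<theta> (hub m g) = 0"
      using stable_star_clique_other_hubs[OF m st g0(1)] by blast
    have "real ((p - 1) * m) = (\<Sum>g\<in>{..<p}-{g0}. X g)" using g0 others X_zero_hub by simp
    also have "\<dots> \<le> (\<Sum>g<p. X g)" using X_nonneg by (intro sum_mono2) auto
    finally show ?thesis .
  qed
  also have "\<dots> \<le> (\<Sum>g<p. \<bar>\<theta> (hub m g)\<bar> + (\<Sum>u\<in>leaves m g. \<bar>\<theta> u\<bar>))"
    using star by (intro sum_mono) auto
  finally have stars: "real ((p - 1) * m) \<le> \<dots>" .
  have "real ((p - 1) * m + r) = real ((p - 1) * m) + (\<Sum>i<r. \<bar>\<theta> (p * Suc m + i)\<bar>)"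
    using isolated by simp
  also have "\<dots> \<le> (\<Sum>g<p. \<bar>\<theta> (hub m g)\<bar> + (\<Sum>u\<in>leaves m g. \<bar>\<theta> u\<bar>)) +
      (\<Sum>i<r. \<bar>\<theta> (p * Suc m + i)\<bar>)"
    using stars by (rule add_right_mono)
  also have "\<dots> = (\<Sum>v<p * Suc m + r. \<bar>\<theta> v\<bar>)" by (rule sum_star_clique[symmetric])
  finally show ?thesis .
qed

definition one_hub_profile :: "nat \<Rightarrow> nat \<Rightarrow> nat \<Rightarrow> nat \<Rightarrow> real" where
  "one_hub_profile p m r v = (if v < p * Suc m then
      (if (v div Suc m = 0) = (v mod Suc m = 0) then 1 else 0)
     else if v < p * Suc m + r then 1 else 0)"

lemma one_hub_profile_hub: "g < p \<Longrightarrow> one_hub_profile p m r (hub m g) = (if g = 0 then 1 else 0)"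
  using hub_less[of g p m] by (simp add: one_hub_profile_def hub_div_mod del: mult_Suc_right)

lemma one_hub_profile_leaf:
  assumes "g < p" "u \<in> leaves m g" shows "one_hub_profile p m r u = (if g = 0 then 0 else 1)"
  using leaf_less[OF assms] leaf_div_mod[OF assms(2)] by (simp add: one_hub_profile_def)

lemma one_hub_profile_isolated: "i < r \<Longrightarrow> one_hub_profile p m r (p * Suc m + i) = 1"
  by (simp add: one_hub_profile_def)

lemma stable_one_hub_profile:
  assumes p: "p \<ge> 1" shows "stable (p * Suc m + r) (star_clique p m) (one_hub_profile p m r)"
  unfolding stable_iff_fixed_point
proof (intro allI impI)
  fix v assume v: "v < p * Suc m + r"
  then show "one_hub_profile p m r v =
    max 0 (1 - nbr_sum (p * Suc m + r) (star_clique p m) v (one_hub_profile p m r))"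
  proof (cases rule: star_clique_vertex_cases)
    case (hub g)
    have "(\<Sum>g'\<in>{..<p}-{g}. one_hub_profile p m r (hub m g')) =
        (\<Sum>g'\<in>{..<p}-{g}. if g' = 0 then 1 else 0)"
      by (intro sum.cong refl) (simp add: one_hub_profile_hub del: mult_Suc_right)
    also have "\<dots> = (if g = 0 then 0 else 1)" using hub(1) p by (simp add: sum.delta)
    finally show ?thesis
      using hub nbr_sum_hub[OF hub(1)] one_hub_profile_hub[OF hub(1)]
        one_hub_profile_leaf[OF hub(1)]
      by auto
  next
    case (leaf g)
    then show ?thesis using nbr_sum_leaf one_hub_profile_hub one_hub_profile_leaf by simp
  next
    case (isolated i)
    then show ?thesis using nbr_sum_isolated one_hub_profile_isolated by simp
  qed
qed

lemma OPT_stable_star_clique_ge: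
  assumes "m \<ge> 2" and "p \<ge> 1"
  shows "real ((p - 1) * m + r) \<le> OPT_stable (p * Suc m + r) (star_clique p m)"
  unfolding OPT_stable_def
proof (rule cInf_greatest)
  show "{\<Sum>v<p * Suc m + r. \<bar>\<theta> v\<bar> |\<theta>. stable (p * Suc m + r) (star_clique p m) \<theta>} \<noteq> {}"
    using stable_one_hub_profile[OF assms(2)] by blast
qed (use stable_star_clique_sum_ge[OF assms(1)] in blast)

section \<open>The Lagrangian lower bound\<close>

definition multiplier :: "real \<Rightarrow> real \<Rightarrow> real" where
  "multiplier M x = (if x < 2/3 then 1/4 else if x < 1 then -1/(4*(1-x)) else -M)"

lemma multiplier_le: "M \<ge> 0 \<Longrightarrow> multiplier M x \<le> 1/4"
  by (auto simp: multiplier_def intro: order_trans[of _ 0] simp: field_simps)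

lemma leaf_term_ge:
  assumes x: "0 \<le> x" "x \<le> 1" and y: "0 \<le> y" "y \<le> 1" and M: "M \<ge> 0"
  shows "(1 - y) / 4 \<le> x - multiplier M x * (x + y - 1) - multiplier M y * x"
proof -
  have hub_part: "multiplier M y * x \<le> x / 4"
    using mult_right_mono[OF multiplier_le[OF M] x(1)] by simp
  consider "x < 2/3" | "2/3 \<le> x" "x < 1" | "x = 1" using x by linarith
  then show ?thesis
  proof cases
    case 1
    then show ?thesis using hub_part x by (simp add: multiplier_def field_simps)
  next
    case 2
    have "multiplier M x * (x + y - 1) = - ((x + y - 1) / (4 * (1 - x)))"
      using 2 by (simp add: multiplier_def)
    also have "\<dots> \<le> - ((x - 1) / (4 * (1 - x)))"
      using 2 y by (intro le_imp_neg_le divide_right_mono) auto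
    also have "\<dots> = 1/4" using 2 by (simp add: field_simps)
    finally have "x - 1/4 - x/4 \<le> x - multiplier M x * (x + y - 1) - multiplier M y * x"
      using hub_part by (intro diff_mono order_refl)
    moreover have "(1 - y) / 4 \<le> x - 1/4 - x/4" using 2 y by simp
    ultimately show ?thesis by (rule order_trans[rotated])
  next
    case 3
    then have eq:
      "x - multiplier M x * (x + y - 1) - multiplier M y * x = 1 + M * y - multiplier M y"
      by (simp add: multiplier_def)
    have "0 \<le> M * y" using M y by simp
    then show ?thesis unfolding eq using multiplier_le[OF M, of y] y by argo
  qed
qed

lemma isolated_term_nonneg:
  assumes "0 \<le> z" "z \<le> 1" "M \<ge> 0"
  shows "0 \<le> z - multiplier M z * (z - 1)"
  using leaf_term_ge[of z 0 M] assms by (simp add: multiplier_def)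

lemma multiplier_light_load:
  fixes y :: "nat \<Rightarrow> real"
  assumes y01: "\<And>g. g < p \<Longrightarrow> 0 \<le> y g \<and> y g \<le> 1" and S1: "(\<Sum>g<p. y g) \<le> 1"
  shows "- 1/4 \<le> (1 - (\<Sum>g<p. y g)) * (\<Sum>g<p. multiplier M (y g))"
proof (cases "\<forall>g<p. y g < 2/3")
  case True
  then have "(\<Sum>g<p. multiplier M (y g)) \<ge> 0" by (simp add: multiplier_def sum_nonneg)
  then have "0 \<le> (1 - (\<Sum>g<p. y g)) * (\<Sum>g<p. multiplier M (y g))"
    using S1 by (intro mult_nonneg_nonneg) auto
  then show ?thesis by simp
next
  case False
  define S where "S = (\<Sum>g<p. y g)"
  obtain g0 where g0: "g0 < p" "y g0 \<ge> 2/3" using False by (auto simp: not_less)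
  have y_le_S: "y g0 + y g \<le> S" if "g < p" "g \<noteq> g0" for g
  proof -
    have "(\<Sum>g'\<in>{g, g0}. y g') \<le> S" unfolding S_def using that g0 y01 by (intro sum_mono2) auto
    then show ?thesis using that by simp
  qed
  have others: "multiplier M (y g) = 1/4" if "g \<in> {..<p} - {g0}" for g
    using y_le_S[of g] that g0 S1 by (simp add: S_def multiplier_def)
  have "(\<Sum>g<p. multiplier M (y g)) = multiplier M (y g0) + (\<Sum>g\<in>{..<p} - {g0}. multiplier M (y g))"
    using g0 by (simp add: sum.remove)
  moreover have "(\<Sum>g\<in>{..<p} - {g0}. multiplier M (y g)) \<ge> 0"
  proof (rule sum_nonneg)
    fix g assume "g \<in> {..<p} - {g0}"
    then have "multiplier M (y g) = 1/4" by (rule others)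
    then show "0 \<le> multiplier M (y g)" by simp
  qed
  ultimately have A: "(\<Sum>g<p. multiplier M (y g)) \<ge> multiplier M (y g0)" by linarith
  have y0_le_S: "y g0 \<le> S" unfolding S_def using g0 y01 by (intro member_le_sum) auto
  have "-1/4 \<le> (1 - S) * multiplier M (y g0)"
  proof (cases "y g0 < 1")
    case True
    then have "(1 - S) * multiplier M (y g0) = - ((1 - S) / (1 - y g0)) / 4"
      using g0 by (simp add: multiplier_def)
    moreover have "(1 - S) / (1 - y g0) \<le> 1" using True y0_le_S by simp
    ultimately show ?thesis by argo
  next
    case False
    then have "S = 1" using y0_le_S S1 by (simp add: S_def)
    then show ?thesis by simp
  qed
  also have "\<dots> \<le> (1 - S) * (\<Sum>g<p. multiplier M (y g))"
    using A S1 by (intro mult_left_mono) (auto simp: S_def)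
  finally show ?thesis by (simp add: S_def)
qed

lemma am_gm_hub_bound:
  fixes T p m S e :: real
  assumes T: "T * T = p * m" "T \<ge> 0" and p: "p \<ge> 0" and m: "m \<ge> 0"
    and S1: "S - 1 \<ge> 3 * p / 8" and e: "0 < e" "e \<le> 1"
  shows "T / 12 \<le> (S - 1) / (4 * e) + m / 4 * e"
proof (cases "T / 12 \<le> m / 4 * e")
  case True
  moreover have "(S - 1) / (4 * e) \<ge> 0" using S1 p e by simp
  ultimately show ?thesis by linarith
next
  case False
  then have me: "3 * m * e < T" by simp
  moreover have "0 \<le> 3 * m * e" using e m by simp
  ultimately have "T > 0" by linarith
  have "T / 12 \<le> 9 * T / 32" using \<open>T > 0\<close> by simp
  also have "9 * T / 32 = (3 * p / 32) * (3 * m / T)" using \<open>T > 0\<close> T(1) by (simp add: field_simps)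
  also have "\<dots> \<le> (3 * p / 32) * (1 / e)"
    using me e \<open>T > 0\<close> p by (intro mult_left_mono) (auto simp: field_simps)
  also have "\<dots> = (3 * p / 8) / (4 * e)" by (simp add: field_simps)
  also have "\<dots> \<le> (S - 1) / (4 * e)" using S1 e by (intro divide_right_mono) auto
  also have "\<dots> \<le> (S - 1) / (4 * e) + m / 4 * e" using m e by simp
  finally show ?thesis .
qed

lemma multiplier_heavy_load:
  fixes T p m S y :: real
  assumes T: "T * T = p * m" "T \<ge> 0" and p: "p \<ge> 2" and m: "m \<ge> 0"
    and S1: "S - 1 \<ge> 3 * p / 8" and Sp: "S \<le> p" and y: "0 \<le> y" "y \<le> 1"
  shows "T / 12 - 3 * (T / 12 + p / 4) * (1 - y) \<le> - multiplier T y * (S - 1) + m / 4 * (1 - y)"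
proof -
  consider "y < 2/3" | "2/3 \<le> y" "y < 1" | "y = 1" using y by linarith
  then show ?thesis
  proof cases
    case 1
    have "(T / 12 + p / 4) * 1 \<le> (T / 12 + p / 4) * (3 * (1 - y))"
      using 1 T(2) p by (intro mult_left_mono) auto
    then have "T / 12 - 3 * (T / 12 + p / 4) * (1 - y) \<le> T / 12 - (T / 12 + p / 4)"
      by (simp add: algebra_simps diff_divide_distrib)
    also have "\<dots> = - p / 4" by simp
    also have "\<dots> \<le> - (1/4) * (S - 1)" using Sp by simp
    also have "\<dots> \<le> - multiplier T y * (S - 1) + m / 4 * (1 - y)"
      using 1 y m by (simp add: multiplier_def)
    finally show ?thesis .
  next
    case 2
    have "T / 12 \<le> (S - 1) / (4 * (1 - y)) + m / 4 * (1 - y)"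
      using 2 by (intro am_gm_hub_bound[OF T _ m S1]) (use p in auto)
    moreover have "0 \<le> 3 * (T / 12 + p / 4) * (1 - y)" using T(2) p y by simp
    moreover have "- multiplier T y * (S - 1) = (S - 1) / (4 * (1 - y))"
      using 2 by (simp add: multiplier_def)
    ultimately show ?thesis by argo
  next
    case 3
    have "1/12 \<le> S - 1" using S1 p by argo
    then have "T * (1/12) \<le> T * (S - 1)" using T(2) by (rule mult_left_mono)
    then show ?thesis using 3 by (simp add: multiplier_def)
  qed
qed

lemma sqrt_mult_bounds:
  fixes a b :: real
  assumes "0 \<le> a" "576 * a \<le> b"
  shows "24 * a \<le> sqrt (a * b)" "sqrt (a * b) \<le> b / 24"
proof -
  have "a * (576 * a) \<le> a * b" using assms by (intro mult_left_mono)
  then have "(24 * a)\<^sup>2 \<le> a * b" by (simp add: power2_eq_square algebra_simps)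
  then show "24 * a \<le> sqrt (a * b)" by (rule real_le_rsqrt)
  have "a \<le> b / 576" "0 \<le> b" using assms by simp_all
  then have "a * b \<le> (b / 576) * b" by (rule mult_right_mono)
  then have "a * b \<le> (b / 24)\<^sup>2" by (simp add: power2_eq_square)
  then have "sqrt (a * b) \<le> sqrt ((b / 24)\<^sup>2)" by (rule real_sqrt_le_mono)
  then show "sqrt (a * b) \<le> b / 24" using \<open>0 \<le> b\<close> by simp
qed

lemma hub_terms_heavy_load:
  fixes y :: "nat \<Rightarrow> real" and T m :: real
  assumes y01: "\<And>g. g < p \<Longrightarrow> 0 \<le> y g \<and> y g \<le> 1" and p2: "p \<ge> 2" and m: "m \<ge> 0"
    and T: "T * T = real p * m" "T \<ge> 0" and pT: "real p * real p \<le> real p * T / 24"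
    and heavy: "7 * real p / 8 < (\<Sum>g<p. y g)"
  shows "real p * T / 24 \<le>
    - (\<Sum>g<p. multiplier T (y g)) * ((\<Sum>g<p. y g) - 1) + m / 4 * (real p - (\<Sum>g<p. y g))"
proof -
  define S where "S = (\<Sum>g<p. y g)"
  have SP: "S \<le> real p" unfolding S_def using sum_mono[of "{..<p}" y "\<lambda>_. 1"] y01 by auto
  have S1: "S - 1 \<ge> 3 * real p / 8" using heavy p2 by (simp add: S_def)
  have "(\<Sum>g<p. T / 12 - 3 * (T / 12 + real p / 4) * (1 - y g)) \<le>
      (\<Sum>g<p. - multiplier T (y g) * (S - 1) + m / 4 * (1 - y g))"
    using multiplier_heavy_load[OF T _ m S1 SP] y01 p2 by (intro sum_mono) auto
  moreover have "(\<Sum>g<p. T / 12 - 3 * (T / 12 + real p / 4) * (1 - y g)) =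
      real p * T / 12 - 3 * (T / 12 + real p / 4) * (real p - S)"
    by (simp add: S_def sum_subtractf sum_distrib_left[symmetric])
  moreover have "(\<Sum>g<p. - multiplier T (y g) * (S - 1) + m / 4 * (1 - y g)) =
      - (\<Sum>g<p. multiplier T (y g)) * (S - 1) + m / 4 * (real p - S)"
  proof -
    have "(\<Sum>g<p. 1 - y g) = real p - S" by (simp add: S_def sum_subtractf)
    then show ?thesis
      by (simp only: sum.distrib sum_negf sum_distrib_right[symmetric] sum_distrib_left[symmetric])
  qed
  moreover have
    "3 * (T / 12 + real p / 4) * (real p - S) \<le> 3 * (T / 12 + real p / 4) * (real p / 8)"
    using heavy T(2) by (intro mult_left_mono) (auto simp: S_def)
  moreover have
    "3 * (T / 12 + real p / 4) * (real p / 8) = real p * T / 32 + 3 * (real p * real p) / 32"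
    by (simp add: field_simps)
  moreover have "real p * T \<ge> 0" using T(2) by simp
  ultimately show ?thesis using pT unfolding S_def by linarith
qed

(* What remains of the Lagrangian once every leaf term has been bounded by leaf_term_ge:
   an expression in the hub values alone. *)
lemma hub_terms_ge:
  fixes y :: "nat \<Rightarrow> real"
  assumes p2: "p \<ge> 2" and mp: "real m \<ge> 576 * real p" and y01: "\<And>g. g < p \<Longrightarrow> 0 \<le> y g \<and> y g \<le> 1"
  defines "T \<equiv> sqrt (real p * real m)" and "S \<equiv> \<Sum>g<p. y g"
  shows "real p * T / 24 \<le> S - (\<Sum>g<p. multiplier T (y g)) * (S - 1) + real m / 4 * (real p - S)"
proof -
  define A where "A = (\<Sum>g<p. multiplier T (y g))"
  have T0: "T \<ge> 0" and TT: "T * T = real p * real m" by (simp_all add: T_def)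
  have T_lower: "24 * real p \<le> T" and T_upper: "T \<le> real m / 24"
    using sqrt_mult_bounds[of "real p" "real m"] mp by (simp_all add: T_def)
  have pT: "real p * T \<le> real p * real m / 24"
    using mult_left_mono[OF T_upper, of "real p"] by simp
  have pp: "real p * real p \<le> real p * T / 24"
    using mult_left_mono[OF T_lower, of "real p"] by simp
  have pm: "real p * real m \<ge> 2304" using mult_mono[of 2 "real p" 1152 "real m"] p2 mp by simp
  have S0: "S \<ge> 0" unfolding S_def using y01 by (intro sum_nonneg) auto
  have SP: "S \<le> real p" unfolding S_def using sum_mono[of "{..<p}" y "\<lambda>_. 1"] y01 by auto
  have A: "A \<le> real p / 4"
    unfolding A_def
    using sum_mono[of "{..<p}" "\<lambda>g. multiplier T (y g)" "\<lambda>_. 1/4"] multiplier_le[OF T0]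
    by auto
  consider "S \<le> 1" | "1 < S" "S \<le> 7 * real p / 8" | "7 * real p / 8 < S" by linarith
  then show ?thesis
  proof cases
    case 1
    have "- 1/4 \<le> (1 - S) * A"
      unfolding S_def A_def using 1 y01 by (intro multiplier_light_load) (auto simp: S_def)
    moreover have "A * (S - 1) = - ((1 - S) * A)" by (simp add: algebra_simps)
    ultimately have c1: "A * (S - 1) \<le> 1/4" by linarith
    have "real m / 4 * (real p - 1) \<le> real m / 4 * (real p - S)"
      using 1 by (intro mult_left_mono) auto
    moreover have "real p * real m / 8 \<le> real m / 4 * (real p - 1)"
      using mult_right_mono[of 2 "real p" "real m"] p2 by (simp add: field_simps)
    ultimately have c2: "real p * real m / 8 \<le> real m / 4 * (real p - S)" by linarith
    show ?thesis using c1 c2 pT pm S0 unfolding A_def[symmetric] by linarith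
  next
    case 2
    have c1: "A * (S - 1) \<le> real p * real p / 4"
      using mult_mono[OF A, of "S - 1" "real p"] 2 SP by simp
    have "real m / 4 * (real p / 8) \<le> real m / 4 * (real p - S)"
      using 2 by (intro mult_left_mono) auto
    then have c2: "real p * real m / 32 \<le> real m / 4 * (real p - S)" by simp
    show ?thesis using c1 c2 pT pp S0 pm unfolding A_def[symmetric] by linarith
  next
    case 3
    have "real p * T / 24 \<le> - A * (S - 1) + real m / 4 * (real p - S)"
      using hub_terms_heavy_load[where y = y and T = T and m = "real m", OF y01 p2 _ TT T0 pp] 3
      unfolding S_def A_def by simp
    then show ?thesis using S0 unfolding A_def by linarith
  qed
qed

lemma star_lagrangian_terms_ge:
  fixes s :: "nat \<Rightarrow> real"
  assumes g: "g < p" and s01: "\<forall>v<p * Suc m + r. 0 \<le> s v \<and> s v \<le> 1" and T: "T \<ge> 0"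
  defines
    "\<Phi> \<equiv> \<lambda>v. s v - multiplier T (s v) * (s v + nbr_sum (p * Suc m + r) (star_clique p m) v s - 1)"
    and "y \<equiv> s (hub m g)" and "S \<equiv> \<Sum>g<p. s (hub m g)"
  shows "y - multiplier T y * (S - 1) + real m / 4 * (1 - y) \<le> \<Phi> (hub m g) + (\<Sum>u\<in>leaves m g. \<Phi> u)"
proof -
  have y01: "0 \<le> y" "y \<le> 1" using s01 hub_less_order[OF g] by (simp_all add: y_def)
  define L where "L = (\<Sum>u\<in>leaves m g. s u)"
  have "nbr_sum (p * Suc m + r) (star_clique p m) (hub m g) s = (S - y) + L"
    using nbr_sum_hub[OF g] g by (simp add: S_def y_def L_def sum_diff1)
  then have "\<Phi> (hub m g) = y - multiplier T y * (y + ((S - y) + L) - 1)"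
    by (simp add: \<Phi>_def y_def)
  also have "\<dots> = y - multiplier T y * (S - 1) - multiplier T y * L"
    by (simp add: algebra_simps)
  also have "multiplier T y * L = (\<Sum>u\<in>leaves m g. multiplier T y * s u)"
    by (simp only: L_def sum_distrib_left)
  finally have hub:
    "\<Phi> (hub m g) = y - multiplier T y * (S - 1) - (\<Sum>u\<in>leaves m g. multiplier T y * s u)" .
  have leaf: "(1 - y) / 4 \<le> \<Phi> u - multiplier T y * s u" if u: "u \<in> leaves m g" for u
    using leaf_term_ge[of "s u" y T] s01 leaf_less_order[OF g u] y01 T nbr_sum_leaf[OF g u]
    by (simp add: \<Phi>_def y_def)
  have "real m / 4 * (1 - y) = (\<Sum>u\<in>leaves m g. (1 - y) / 4)" by simp
  also have "\<dots> \<le> (\<Sum>u\<in>leaves m g. \<Phi> u - multiplier T y * s u)" by (intro sum_mono leaf)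
  finally show ?thesis unfolding hub sum_subtractf by argo
qed

lemma lagrangian_star_clique_ge:
  assumes p2: "p \<ge> 2" and mp: "real m \<ge> 576 * real p"
    and s01: "\<forall>v<p * Suc m + r. 0 \<le> s v \<and> s v \<le> 1"
  defines "T \<equiv> sqrt (real p * real m)"
  shows "real p * T / 24 \<le> lagrangian (p * Suc m + r) (star_clique p m) (multiplier T) s"
proof -
  define \<Phi> where
    "\<Phi> v = s v - multiplier T (s v) * (s v + nbr_sum (p * Suc m + r) (star_clique p m) v s - 1)"
    for v
  define y where "y g = s (hub m g)" for g
  define S where "S = (\<Sum>g<p. y g)"
  have T0: "T \<ge> 0" by (simp add: T_def)
  have "real p * T / 24 \<le> S - (\<Sum>g<p. multiplier T (y g)) * (S - 1) + real m / 4 * (real p - S)"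
    unfolding S_def T_def using hub_terms_ge[OF p2 mp] s01 hub_less_order by (simp add: y_def)
  also have "\<dots> = (\<Sum>g<p. y g - multiplier T (y g) * (S - 1) + real m / 4 * (1 - y g))"
  proof -
    have "(\<Sum>g<p. 1 - y g) = real p - S" by (simp add: S_def sum_subtractf)
    then show ?thesis
      by (simp only: S_def sum.distrib sum_subtractf sum_distrib_right[symmetric]
          sum_distrib_left[symmetric])
  qed
  also have "\<dots> \<le> (\<Sum>g<p. \<Phi> (hub m g) + (\<Sum>u\<in>leaves m g. \<Phi> u))"
    using star_lagrangian_terms_ge[OF _ s01 T0] unfolding \<Phi>_def y_def S_def by (intro sum_mono) simp
  also have "\<dots> \<le> (\<Sum>g<p. \<Phi> (hub m g) + (\<Sum>u\<in>leaves m g. \<Phi> u)) + (\<Sum>i<r. \<Phi> (p * Suc m + i))"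
    using isolated_term_nonneg[OF _ _ T0] s01 nbr_sum_isolated
    by (intro le_add_same_cancel1[THEN iffD2] sum_nonneg) (simp add: \<Phi>_def)
  also have "\<dots> = lagrangian (p * Suc m + r) (star_clique p m) (multiplier T) s"
    unfolding lagrangian_def \<Phi>_def by (rule sum_star_clique[symmetric])
  finally show ?thesis .
qed

lemma cost_star_clique_ge:
  assumes "p \<ge> 2" and "real m \<ge> 576 * real p"
    and "scheme (p * Suc m + r) Sig \<phi>" and "persuasive (p * Suc m + r) (star_clique p m) Sig \<phi>"
  shows "real p * sqrt (real p * real m) / 24 \<le> cost (p * Suc m + r) \<phi>"
proof (rule cost_ge_lagrangian[OF assms(3,4), where \<alpha> = "multiplier (sqrt (real p * real m))"])
  show "0 \<le> multiplier (sqrt (real p * real m)) 0" by (simp add: multiplier_def)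
next
  fix s :: "nat \<Rightarrow> real" assume "\<forall>v<p * Suc m + r. 0 \<le> s v \<and> s v \<le> 1"
  then show "real p * sqrt (real p * real m) / 24 \<le>
      lagrangian (p * Suc m + r) (star_clique p m) (multiplier (sqrt (real p * real m))) s"
    by (rule lagrangian_star_clique_ge[OF assms(1,2)])
qed

section \<open>Choice of parameters\<close>

lemma hub_count_choice:
  fixes n k :: nat
  assumes n: "9216 \<le> n" and k: "2 \<le> k"
  obtains p where "2 \<le> p" "p \<le> k" "real p \<le> sqrt (real n) / 48"
    "p = k \<or> sqrt (real n) / 96 \<le> real p"
proof -
  define sn where "sn = sqrt (real n)"
  have "sqrt (96 * 96) \<le> sn" unfolding sn_def using n by (intro real_sqrt_le_mono) simp
  then have sn96: "96 \<le> sn" by simp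
  define K where "K = nat \<lfloor>sn / 48\<rfloor>"
  have "real K = real_of_int \<lfloor>sn / 48\<rfloor>" using sn96 by (simp add: K_def)
  then have K_upper: "real K \<le> sn / 48" and K_lower: "sn / 48 - 1 < real K"
    using of_int_floor_le[of "sn / 48"] real_of_int_floor_gt_diff_one[of "sn / 48"] by linarith+
  have "2 \<le> K" using K_lower sn96 by linarith
  show ?thesis
  proof (rule that[of "min k K"])
    show "2 \<le> min k K" "min k K \<le> k" using k \<open>2 \<le> K\<close> by simp_all
    show "real (min k K) \<le> sqrt (real n) / 48" using K_upper by (simp add: sn_def)
    show "min k K = k \<or> sqrt (real n) / 96 \<le> real (min k K)"
      using K_lower sn96 by (auto simp: sn_def min_def)
  qed
qed

lemma leaf_count_choice:
  fixes n p :: nat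
  assumes p2: "2 \<le> p" and p_upper: "real p \<le> sqrt (real n) / 48"
  defines "m \<equiv> n div (2 * p) - 1"
  shows "576 * real p \<le> real m" and "2 * (p * Suc m) \<le> n" and "real n / 4 \<le> real p * real m"
proof -
  define sn where "sn = sqrt (real n)"
  define q where "q = n div (2 * p)"
  have sn_sq: "sn * sn = real n" by (simp add: sn_def)
  have "96 \<le> sn" using p2 p_upper by (simp add: sn_def)
  then have sn_n: "sn \<le> real n" using sn_sq mult_left_mono[of 1 sn sn] by simp
  have q_upper: "q * (2 * p) \<le> n" unfolding q_def by (rule div_times_less_eq_dividend)
  have q_lower: "real n < (real q + 1) * (2 * real p)"
  proof -
    have e: "n = q * (2 * p) + n mod (2 * p)" unfolding q_def by (rule div_mult_mod_eq[symmetric])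
    have "real n = real q * (2 * real p) + real (n mod (2 * p))"
      using arg_cong[OF e, of real] by simp
    moreover have "n mod (2 * p) < 2 * p" using p2 by simp
    then have "real (n mod (2 * p)) < 2 * real p" by linarith
    ultimately show ?thesis by (simp add: algebra_simps)
  qed
  have pp: "real p * real p \<le> real n / 2304"
    using mult_mono[OF p_upper p_upper] sn_sq by (simp add: sn_def)
  have "(577 * real p + 2) * (2 * real p) = 1154 * (real p * real p) + 4 * real p"
    by (simp add: algebra_simps)
  also have "\<dots> < (real q + 1) * (2 * real p)"
    using pp p_upper sn_n q_lower \<open>96 \<le> sn\<close> by (simp add: sn_def)
  finally have "577 * real p + 1 \<le> real q" using p2 by simp
  moreover have m: "m = q - 1" "Suc m = q" using calculation by (simp_all add: m_def q_def)
  ultimately show "576 * real p \<le> real m" by (simp add: of_nat_diff)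
  show "2 * (p * Suc m) \<le> n" using q_upper unfolding m(2) by (simp add: ac_simps)
  have "real p * real m = real q * real p - real p" using m by (simp add: algebra_simps of_nat_diff)
  moreover have "real q * real p \<ge> real n / 2 - real p" using q_lower by (simp add: algebra_simps)
  moreover have "real p \<le> real n / 8" using p_upper sn_n by (simp add: sn_def)
  ultimately show "real n / 4 \<le> real p * real m" by linarith
qed

lemma cost_target_le:
  fixes n k p m :: nat
  assumes p_lower: "p = k \<or> sqrt (real n) / 96 \<le> real p" and pm: "real n / 4 \<le> real p * real m"
  shows "1/4608 * min (real k * sqrt (real n)) (real n) \<le> real p * sqrt (real p * real m) / 24"
proof -
  have "sqrt (real n) / 2 = sqrt (real n / 4)" by (simp add: real_sqrt_divide)
  also have "\<dots> \<le> sqrt (real p * real m)" using pm by (rule real_sqrt_le_mono)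
  finally have "real p * sqrt (real n) / 48 \<le> real p * sqrt (real p * real m) / 24"
    using mult_left_mono[of "sqrt (real n) / 2" _ "real p"] by simp
  moreover have "1/4608 * min (real k * sqrt (real n)) (real n) \<le> real p * sqrt (real n) / 48"
    using p_lower
  proof
    assume "p = k"
    then show ?thesis by (simp add: min_def)
  next
    assume "sqrt (real n) / 96 \<le> real p"
    then have "sqrt (real n) / 96 * sqrt (real n) \<le> real p * sqrt (real n)"
      by (rule mult_right_mono) simp
    then show ?thesis by (simp add: min_def)
  qed
  ultimately show ?thesis by linarith
qed

lemma star_clique_construction:
  fixes n k :: nat
  assumes n: "9216 \<le> n" and k: "2 \<le> k" "k \<le> n"
  shows "\<exists>N E. N \<le> n \<and> unit_graph N E \<and>
    1/2 * real k \<le> OPT N E \<and> OPT N E \<le> 2 * real k \<and>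
    OPT_stable N E \<ge> 1/8 * real n \<and>
    (\<forall>Sig \<phi>. scheme N Sig \<phi> \<and> persuasive N E Sig \<phi> \<longrightarrow>
       cost N \<phi> \<ge> 1/4608 * min (real k * sqrt (real n)) (real n))"
proof -
  obtain p where p2: "2 \<le> p" and pk: "p \<le> k" and p_upper: "real p \<le> sqrt (real n) / 48"
    and p_lower: "p = k \<or> sqrt (real n) / 96 \<le> real p"
    using hub_count_choice[OF n k(1)] .
  define m where "m = n div (2 * p) - 1"
  define r where "r = k div 2"
  have mp: "576 * real p \<le> real m" and size: "2 * (p * Suc m) \<le> n"
    and pm: "real n / 4 \<le> real p * real m"
    using leaf_count_choice[OF p2 p_upper] by (simp_all add: m_def)
  have m2: "2 \<le> m" using mp p2 by linarith
  have opt: "OPT (p * Suc m + r) (star_clique p m) = real (p + r)"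
    using m2 by (intro OPT_star_clique) simp
  have "2 * real m \<le> real p * real m" using p2 by (intro mult_right_mono) auto
  moreover have "real ((p - 1) * m) = real p * real m - real m"
    using p2 by (simp add: of_nat_diff algebra_simps)
  ultimately have "real p * real m / 2 \<le> real ((p - 1) * m)" by linarith
  then have stable: "real n / 8 \<le> OPT_stable (p * Suc m + r) (star_clique p m)"
    using OPT_stable_star_clique_ge[OF m2, of p r] p2 pm by simp
  show ?thesis
  proof (intro exI conjI allI impI)
    show "p * Suc m + r \<le> n" using size k by (simp add: r_def)
    show "unit_graph (p * Suc m + r) (star_clique p m)" by (rule unit_graph_star_clique)
    have "real k \<le> 2 * real r + 1" "2 * real r \<le> real k" unfolding r_def by linarith+
    then show "1/2 * real k \<le> OPT (p * Suc m + r) (star_clique p m)"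
      "OPT (p * Suc m + r) (star_clique p m) \<le> 2 * real k"
      unfolding opt using p2 pk by simp_all
    show "1/8 * real n \<le> OPT_stable (p * Suc m + r) (star_clique p m)" using stable by simp
  next
    fix Sig \<phi>
    assume "scheme (p * Suc m + r) Sig \<phi> \<and> persuasive (p * Suc m + r) (star_clique p m) Sig \<phi>"
    then have "real p * sqrt (real p * real m) / 24 \<le> cost (p * Suc m + r) \<phi>"
      using cost_star_clique_ge[OF p2 mp] by blast
    then show "1/4608 * min (real k * sqrt (real n)) (real n) \<le> cost (p * Suc m + r) \<phi>"
      using cost_target_le[OF p_lower pm] by linarith
  qed
qed

theorem theorem6p2:
  shows "\<exists>c1 c2 c3 c4 :: real. c1 > 0 \<and> c2 > 0 \<and> c3 > 0 \<and> c4 > 0 \<and>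
    (\<exists>n0 :: nat. \<forall>n \<ge> n0. \<forall>k :: nat. 2 \<le> k \<and> k \<le> n \<longrightarrow>
      (\<exists>N E. N \<le> n \<and> unit_graph N E \<and>
         c1 * real k \<le> OPT N E \<and> OPT N E \<le> c2 * real k \<and>
         OPT_stable N E \<ge> c3 * real n \<and>
         (\<forall>Sig \<phi>. scheme N Sig \<phi> \<and> persuasive N E Sig \<phi> \<longrightarrow>
            cost N \<phi> \<ge> c4 * min (real k * sqrt (real n)) (real n))))"
  using star_clique_construction
  by (intro exI[of _ "1/2"] exI[of _ "2::real"] exI[of _ "1/8"] exI[of _ "1/4608"] conjI
      exI[of _ "9216::nat"]) simp_all

end
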